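(* Fix integers $j,k$ with $0\le j\le k-1$. Expand the polynomial $(2m+1)(2m+3)\cdots(2m+2k-1)$ in the variable $m$ in the basis $1,\ m,\ m(m-1),\ \dots,\ m(m-1)\cdots(m-k+1)$, and let $C^N_k$ denote the coefficient of $m(m-1)\cdots(m-N+1)$ ($0\le N\le k$). Then $$\sum_{N=j}^{k}(-1)^N C^N_k\,\frac{(2N)!}{(N-j)!\,2^{2N}}=0.$$ *)

theory Defs
  imports Complex_Main
begin

definition falling :: "nat \<Rightarrow> real \<Rightarrow> real" where
  "falling N m = (\<Prod>i<N. (m - real i))"

definition C :: "nat \<Rightarrow> nat \<Rightarrow> real" where
  "C k N = (THE c :: nat \<Rightarrow> real. (\<forall>n>k. c n = 0) \<and>
      (\<forall>m::real. (\<Prod>i=1..k. 2*m + 2*real i - 1) = (\<Sum>n\<le>k. c n * falling n m))) N"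

end

theory Submission
  imports Defs
begin

(* Let P(m) = (2m+1)(2m+3)...(2m+2k-1) and a = -1/2 - j. Since j < k, the points
   a, a+1, ..., a+j = -1/2 are all roots of P, so the j-th forward difference of P at a
   vanishes. With (x)_n the falling factorial, the difference of (m)_N is N!/(N-j)! (m)_(N-j),
   so sum_N C^N_k N!/(N-j)! (a)_(N-j) = 0. Multiplying by (-1/2)_j gives the theorem, because
   (-1/2)_j (a)_(N-j) = (-1/2)_N = (-1)^N (2N)! / (4^N N!). *)

lemma falling_Suc: "falling (Suc n) x = falling n x * (x - real n)"
  by (simp add: falling_def)

lemma falling_Suc_shift: "falling (Suc n) (x + 1) = (x + 1) * falling n x"
  unfolding falling_def by (subst prod.lessThan_Suc_shift) (simp add: algebra_simps)

lemma falling_add: "falling (j + r) x = falling j x * falling r (x - real j)"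
  by (induction r) (simp_all add: falling_Suc falling_def algebra_simps)

lemma falling_of_nat_eq_0: "N < n \<Longrightarrow> falling n (real N) = 0"
  unfolding falling_def by (rule prod_zero) auto

lemma falling_eq_pochhammer: "falling n x = pochhammer (x - real n + 1) n"
  unfolding falling_def pochhammer_prod_rev
  by (rule prod.reindex_bij_witness[of _ "\<lambda>i. i - 1" Suc]) (auto simp: of_nat_diff)

lemma falling_of_nat_self: "falling n (real n) = fact n"
  by (simp add: falling_eq_pochhammer pochhammer_fact)

lemma fact_div_fact_diff:
  assumes "j \<le> N"
  shows "fact N / fact (N - j) = falling j (real N)"
proof -
  have "fact N = falling j (real N) * falling (N - j) (real (N - j))"
    using falling_add[of j "N - j" "real N"] assms by (simp add: falling_of_nat_self of_nat_diff)
  then show ?thesis by (simp add: falling_of_nat_self)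
qed

lemma falling_minus_half: "falling n (-1/2) = (-1)^n * pochhammer (1/2) n"
  using pochhammer_minus'[of "-1/2 :: real" n] by (simp add: falling_eq_pochhammer)

lemma fact_double_eq_falling: "(-1)^n * fact (2*n) / 2^(2*n) = fact n * falling n (-1/2)"
  using falling_minus_half[of n] by (simp add: fact_double)

lemma falling_diff: "falling n (x + 1) - falling n x = real n * falling (n - 1) x"
proof (cases n)
  case (Suc m)
  then show ?thesis unfolding Suc
    by (subst falling_Suc_shift, subst falling_Suc) (simp add: algebra_simps)
qed (simp add: falling_def)

fun fwd_diff :: "nat \<Rightarrow> ('a::semiring_1 \<Rightarrow> 'b::ab_group_add) \<Rightarrow> 'a \<Rightarrow> 'b" where
  "fwd_diff 0 f x = f x"
| "fwd_diff (Suc j) f x = fwd_diff j f (x + 1) - fwd_diff j f x"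

lemma fwd_diff_eq_0:
  assumes "\<And>i. i \<le> j \<Longrightarrow> f (x + of_nat i) = 0"
  shows "fwd_diff j f x = 0"
  using assms
proof (induction j arbitrary: x)
  case (Suc j)
  have "fwd_diff j f (x + 1) = 0"
    using Suc.prems[of "Suc _"] by (intro Suc.IH) (simp add: add.assoc)
  moreover have "fwd_diff j f x = 0"
    using Suc.prems by (intro Suc.IH) auto
  ultimately show ?case by simp
qed simp

lemma fwd_diff_sum:
  "fwd_diff j (\<lambda>x. \<Sum>n\<in>A. c n * g n x) x = (\<Sum>n\<in>A. c n * fwd_diff j (g n) x)"
  for c :: "nat \<Rightarrow> 'b::ring"
  by (induction j arbitrary: x) (simp_all add: sum_subtractf right_diff_distrib)

lemma fwd_diff_falling: "fwd_diff j (falling N) x = falling j (real N) * falling (N - j) x"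
proof (induction j arbitrary: x)
  case 0
  show ?case by (simp add: falling_def)
next
  case (Suc j)
  have "fwd_diff (Suc j) (falling N) x =
      falling j (real N) * (falling (N - j) (x + 1) - falling (N - j) x)"
    using Suc by (simp add: right_diff_distrib)
  also have "\<dots> = falling j (real N) * real (N - j) * falling (N - Suc j) x"
    by (simp add: falling_diff)
  also have "\<dots> = falling (Suc j) (real N) * falling (N - Suc j) x"
    by (cases "j < N")
      (auto simp: falling_Suc of_nat_diff falling_of_nat_eq_0 linorder_not_less le_less)
  finally show ?case .
qed

lemma falling_expansion_fwd_diff_eq_0:
  assumes "\<And>i. i \<le> j \<Longrightarrow> (\<Sum>n\<le>k. c n * falling n (x + real i)) = 0"
  shows "(\<Sum>n\<le>k. c n * (falling j (real n) * falling (n - j) x)) = 0"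
proof -
  have "fwd_diff j (\<lambda>x. \<Sum>n\<le>k. c n * falling n x) x = 0"
    using assms by (rule fwd_diff_eq_0)
  then show ?thesis by (simp add: fwd_diff_sum fwd_diff_falling)
qed

lemma falling_expansion_coeffs_eq_0:
  assumes "\<And>m. (\<Sum>n\<le>k. e n * falling n m) = 0" and "i \<le> k"
  shows "e i = 0"
  using assms(2)
proof (induction i rule: less_induct)
  case (less i)
  \<comment> \<open>At m = i the terms with n > i vanish, and those with n < i by induction.\<close>
  have "e n * falling n (real i) = 0" if "n \<le> k" "n \<noteq> i" for n
    using that less falling_of_nat_eq_0[of i n] by (cases "n < i") auto
  then have "(\<Sum>n\<in>{..k} - {i}. e n * falling n (real i)) = 0"
    by (intro sum.neutral) auto
  then have "e i * falling i (real i) = 0"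
    using assms(1)[of "real i"] less.prems by (simp add: sum.remove)
  then show ?case by (simp add: falling_of_nat_self)
qed

definition odd_prod :: "nat \<Rightarrow> real \<Rightarrow> real" where
  "odd_prod k m = (\<Prod>i=1..k. 2*m + 2*real i - 1)"

lemma odd_prod_Suc: "odd_prod (Suc k) m = odd_prod k m * (2*m + 2*real k + 1)"
  by (simp add: odd_prod_def prod.nat_ivl_Suc' algebra_simps)

lemma odd_prod_root: "1 \<le> l \<Longrightarrow> l \<le> k \<Longrightarrow> odd_prod k (1/2 - real l) = 0"
  unfolding odd_prod_def by (rule prod_zero) auto

lemma odd_prod_falling_expansion_exists:
  "\<exists>c. (\<forall>n>k. c n = 0) \<and> (\<forall>m. odd_prod k m = (\<Sum>n\<le>k. c n * falling n m))"
proof (induction k)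
  case 0
  show ?case
    by (rule exI[of _ "\<lambda>n. if n = 0 then 1 else 0"]) (simp add: odd_prod_def falling_def)
next
  case (Suc k)
  then obtain c where c_supp: "\<forall>n>k. c n = 0"
    and c_exp: "\<And>m. odd_prod k m = (\<Sum>n\<le>k. c n * falling n m)"
    by blast
  \<comment> \<open>From (2m + 2k + 1) (m)_n = 2 (m)_(n+1) + (2n + 2k + 1) (m)_n.\<close>
  define c' where "c' n = (if n = 0 then 0 else 2 * c (n - 1)) + (2*real n + 2*real k + 1) * c n"
    for n
  have "odd_prod (Suc k) m = (\<Sum>n\<le>Suc k. c' n * falling n m)" for m
  proof -
    have "odd_prod (Suc k) m = (\<Sum>n\<le>k. 2 * c n * falling (Suc n) m) +
        (\<Sum>n\<le>k. (2*real n + 2*real k + 1) * c n * falling n m)"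
      unfolding odd_prod_Suc c_exp sum_distrib_right sum.distrib[symmetric]
      by (rule sum.cong) (simp_all add: falling_Suc algebra_simps)
    also have "(\<Sum>n\<le>k. 2 * c n * falling (Suc n) m) =
        (\<Sum>n\<le>Suc k. (if n = 0 then 0 else 2 * c (n - 1)) * falling n m)"
      unfolding sum.atMost_Suc_shift by simp
    also have "(\<Sum>n\<le>k. (2*real n + 2*real k + 1) * c n * falling n m) =
        (\<Sum>n\<le>Suc k. (2*real n + 2*real k + 1) * c n * falling n m)"
      using c_supp by simp
    also have "(\<Sum>n\<le>Suc k. (if n = 0 then 0 else 2 * c (n - 1)) * falling n m) +
        (\<Sum>n\<le>Suc k. (2*real n + 2*real k + 1) * c n * falling n m) =
        (\<Sum>n\<le>Suc k. c' n * falling n m)"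
      unfolding sum.distrib[symmetric] c'_def by (rule sum.cong) (simp_all add: algebra_simps)
    finally show ?thesis .
  qed
  moreover have "\<forall>n>Suc k. c' n = 0"
    using c_supp by (simp add: c'_def)
  ultimately show ?case by blast
qed

lemma odd_prod_eq_C_expansion: "odd_prod k m = (\<Sum>n\<le>k. C k n * falling n m)"
proof -
  define expands where "expands c \<longleftrightarrow> (\<forall>n>k. c n = 0) \<and>
      (\<forall>m::real. (\<Prod>i=1..k. 2*m + 2*real i - 1) = (\<Sum>n\<le>k. c n * falling n m))"
    for c :: "nat \<Rightarrow> real"
  obtain c where c: "expands c"
    using odd_prod_falling_expansion_exists[of k] unfolding expands_def odd_prod_def by blast
  have unique: "d = c" if "expands d" for d
  proof
    fix n
    have "(\<Sum>n\<le>k. (d n - c n) * falling n m) = 0" for m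
      using that c unfolding expands_def by (simp add: left_diff_distrib sum_subtractf)
    then show "d n = c n"
      using that c falling_expansion_coeffs_eq_0[of "\<lambda>n. d n - c n" k n]
      unfolding expands_def by (cases "n \<le> k") auto
  qed
  have "C k = c"
    unfolding C_def expands_def[symmetric] using c unique by (rule the_equality)
  then show ?thesis
    using c unfolding expands_def odd_prod_def by simp
qed

lemma central_term_eq_falling:
  assumes "j \<le> N"
  shows "(-1)^N * fact (2*N) / (fact (N - j) * 2^(2*N)) =
    falling j (-1/2) * (falling j (real N) * falling (N - j) (-1/2 - real j))"
proof -
  have "falling N (-1/2) = falling j (-1/2) * falling (N - j) (-1/2 - real j)"
    using falling_add[of j "N - j" "-1/2"] assms by simp
  then show ?thesis
    using fact_double_eq_falling[of N] fact_div_fact_diff[OF assms]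
    by (simp add: field_simps)
qed

theorem lemma3p14:
  fixes j k :: nat
  assumes "j \<le> k - 1" and "1 \<le> k"
  shows "(\<Sum>N=j..k. (-1)^N * C k N * fact (2*N) / (fact (N - j) * 2^(2*N))) = (0::real)"
proof -
  define a where "a = -1/2 - real j"
  have "(\<Sum>n\<le>k. C k n * falling n (a + real i)) = 0" if "i \<le> j" for i
  proof -
    have root: "a + real i = 1/2 - real (j - i + 1)"
      using that by (simp add: a_def of_nat_diff)
    have "odd_prod k (a + real i) = 0"
      unfolding root using that assms by (intro odd_prod_root) auto
    then show ?thesis
      by (simp add: odd_prod_eq_C_expansion)
  qed
  then have "(\<Sum>n\<le>k. C k n * (falling j (real n) * falling (n - j) a)) = 0"
    by (rule falling_expansion_fwd_diff_eq_0)
  moreover have "(\<Sum>n\<le>k. C k n * (falling j (real n) * falling (n - j) a)) =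
      (\<Sum>n=j..k. C k n * (falling j (real n) * falling (n - j) a))"
    by (rule sum.mono_neutral_right) (auto simp: falling_of_nat_eq_0)
  moreover have "(\<Sum>N=j..k. (-1)^N * C k N * fact (2*N) / (fact (N - j) * 2^(2*N))) =
      falling j (-1/2) * (\<Sum>N=j..k. C k N * (falling j (real N) * falling (N - j) a))"
  proof -
    have "(-1)^N * C k N * fact (2*N) / (fact (N - j) * 2^(2*N)) =
        falling j (-1/2) * (C k N * (falling j (real N) * falling (N - j) a))" if "j \<le> N" for N
      using central_term_eq_falling[OF that, folded a_def]
      by (simp add: mult_ac flip: times_divide_eq_right)
    then show ?thesis
      unfolding sum_distrib_left by (intro sum.cong) auto
  qed
  ultimately show ?thesis by simp
qed

end
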